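(* Let $\lambda>-1/2$, $\lambda\neq0$, let $M\ge0$, $a_0,\dots,a_M\in\mathbb{R}$ and $f_M(x)=\sum_{m=0}^M a_mC^{(\lambda)}_m(x)$. For integers $n\ge -1$ and $y\in[-1,1]$ let $\tilde R_n(y)=\int_{-1}^{y}f_M(y-1-t)\,C^{(\lambda)}_n(t)\,\mathrm{d}t$ (so $\tilde R_{-1}\equiv0$). Then $$\tilde R_0(y)=\int_{-1}^{y}f_M(t)\,\mathrm{d}t,$$ and for every integer $n\ge0$ and $y\in[-1,1]$, $$\tilde R_{n+1}(y)=2(n+\lambda)\int_{-1}^{y}\tilde R_n(s)\,\mathrm{d}s+\tilde R_{n-1}(y)+S^{(\lambda)}_n\int_{-1}^{y}f_M(t)\,\mathrm{d}t,$$ where $$S^{(\lambda)}_n=\frac{2(-1)^{n+1}(\lambda+n)(2\lambda-1)_n}{(n+1)!}.$$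
   Context: Gegenbauer polynomials $C^{(\lambda)}_n$ ($\lambda>-1/2$, $\lambda\ne0$) are defined by $C^{(\lambda)}_{-1}=0$, $C^{(\lambda)}_0=1$ and $2(n+\lambda)xC^{(\lambda)}_n(x)=(n+1)C^{(\lambda)}_{n+1}(x)+(n+2\lambda-1)C^{(\lambda)}_{n-1}(x)$ for $n\ge0$; $C^{(\lambda)}_n:=0$ for $n<0$. $(a)_n=a(a+1)\cdots(a+n-1)$ is the Pochhammer symbol, $(a)_0=1$. $\tilde R_n(y)$ is the convolution $\int_{-1}^{x+1}f_M(x-t)C^{(\lambda)}_n(t)\,\mathrm{d}t$ at $x=y-1$. *)

theory Defs
  imports "HOL-Analysis.Analysis"
begin

text \<open>Gegenbauer polynomials via the three-term recurrence, for nonnegative index: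
  C_0 = 1, C_1 = 2 l x (recurrence at n = 0 with C_{-1} = 0), and
  (n+2) C_{n+2} = 2(n+1+l) x C_{n+1} - (n+1+2l-1) C_n.\<close>
fun gegen_nat :: "real \<Rightarrow> nat \<Rightarrow> real \<Rightarrow> real" where
  "gegen_nat l 0 x = 1"
| "gegen_nat l (Suc 0) x = 2 * l * x"
| "gegen_nat l (Suc (Suc n)) x =
     (2 * (real n + 1 + l) * x * gegen_nat l (Suc n) x
       - (real n + 2 * l) * gegen_nat l n x) / (real n + 2)"

definition gegenbauer :: "real \<Rightarrow> int \<Rightarrow> real \<Rightarrow> real" where
  "gegenbauer l n x = (if n < 0 then 0 else gegen_nat l (nat n) x)"

definition fM :: "real \<Rightarrow> nat \<Rightarrow> (nat \<Rightarrow> real) \<Rightarrow> real \<Rightarrow> real" where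
  "fM l M a x = (\<Sum>m\<le>M. a m * gegenbauer l (int m) x)"

definition Rtilde :: "real \<Rightarrow> nat \<Rightarrow> (nat \<Rightarrow> real) \<Rightarrow> int \<Rightarrow> real \<Rightarrow> real" where
  "Rtilde l M a n y = integral {-1..y} (\<lambda>t. fM l M a (y - 1 - t) * gegenbauer l n t)"

definition Scoef :: "real \<Rightarrow> nat \<Rightarrow> real" where
  "Scoef l n = 2 * (-1) ^ (n + 1) * (l + real n) * pochhammer (2 * l - 1) n / fact (n + 1)"

end

theory Submission
  imports Defs "HOL-Computational_Algebra.Polynomial"
begin

text \<open>
  From the two classical relations x C'_{m+1} - C'_m = (m+1) C_{m+1} and
  C'_{m+1} - x C'_m = (m+2\<lambda>) C_m one gets C'_{n+1} - C'_{n-1} = 2(n+\<lambda>) C_n, and the value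
  C_n(-1) = (-1)^n (2\<lambda>)_n / n! shows S_n = C_{n+1}(-1) - C_{n-1}(-1). Hence
  \<Phi> = (C_{n+1} - C_{n-1} - S_n) / (2(n+\<lambda>)) is the antiderivative of C_n vanishing at -1, and
  C_{n+1} = C_{n-1} + S_n + 2(n+\<lambda>) \<Phi>. Convolving with f_M, the constant S_n contributes
  S_n \<integral> f_M (by the reflection t \<mapsto> y - 1 - t), and the convolution of f_M with \<Phi> is the
  antiderivative of the convolution of f_M with C_n: differentiate under the integral sign and
  integrate by parts, using \<Phi>(-1) = 0.
\<close>

lemma integral_reflect_Icc:
  fixes g :: "real \<Rightarrow> 'b::banach"
  shows "integral {a..b} (\<lambda>t. g (a + b - t)) = integral {a..b} g"
proof -
  have "integral {a..b} (\<lambda>t. g (a + b - t)) = integral {a..b} ((\<lambda>u. g (- u)) \<circ> (+) (- (a + b)))"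
    by (simp add: o_def algebra_simps)
  also have "\<dots> = integral {- b..- a} (\<lambda>u. g (- u))"
    by (simp add: integral_shift_Icc_real)
  also have "\<dots> = integral {a..b} g"
    by simp
  finally show ?thesis .
qed

lemma has_real_derivative_integral_separable:
  fixes \<alpha> \<alpha>' \<beta> :: "'i \<Rightarrow> real \<Rightarrow> real"
  assumes I: "finite I"
    and \<alpha>: "\<And>i y. (\<alpha> i has_real_derivative \<alpha>' i y) (at y)"
    and \<beta>: "\<And>i. continuous_on {a..b} (\<beta> i)"
    and s: "s \<in> {a..b}"
  shows "((\<lambda>y. integral {a..y} (\<lambda>t. \<Sum>i\<in>I. \<alpha> i y * \<beta> i t)) has_real_derivative
      (\<Sum>i\<in>I. \<alpha> i s * \<beta> i s) + integral {a..s} (\<lambda>t. \<Sum>i\<in>I. \<alpha>' i s * \<beta> i t)) (at s within {a..b})"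
proof -
  have integral_sum_mult: "integral {a..y} (\<lambda>t. \<Sum>i\<in>I. c i * \<beta> i t) = (\<Sum>i\<in>I. c i * integral {a..y} (\<beta> i))"
    if "y \<in> {a..b}" for c y
  proof -
    have "\<beta> i integrable_on {a..y}" for i
      using that by (intro integrable_continuous_interval continuous_on_subset[OF \<beta>]) auto
    then show ?thesis
      by (simp add: integral_sum[OF I] integrable_on_mult_right)
  qed
  have "((\<lambda>y. \<Sum>i\<in>I. \<alpha> i y * integral {a..y} (\<beta> i)) has_real_derivative
      (\<Sum>i\<in>I. \<alpha> i s * \<beta> i s + \<alpha>' i s * integral {a..s} (\<beta> i))) (at s within {a..b})"
    by (intro DERIV_sum DERIV_mult' DERIV_subset[OF \<alpha>] integral_has_real_derivative \<beta> s) auto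
  also have "(\<Sum>i\<in>I. \<alpha> i s * \<beta> i s + \<alpha>' i s * integral {a..s} (\<beta> i))
      = (\<Sum>i\<in>I. \<alpha> i s * \<beta> i s) + integral {a..s} (\<lambda>t. \<Sum>i\<in>I. \<alpha>' i s * \<beta> i t)"
    by (simp add: integral_sum_mult[OF s] sum.distrib)
  finally show ?thesis
    by (rule has_field_derivative_transform_within[where d = 1])
      (use s integral_sum_mult in auto)
qed

lemma poly_add_binomial_expansion:
  fixes P :: "'a::comm_semiring_1 poly"
  shows "poly P (y + u) = (\<Sum>(j, i)\<in>Sigma {..degree P} (\<lambda>j. {..j}).
           (coeff P j * of_nat (j choose i) * y ^ i) * u ^ (j - i))"
proof -
  have "poly P (y + u) = (\<Sum>j\<le>degree P. \<Sum>i\<le>j. coeff P j * of_nat (j choose i) * y ^ i * u ^ (j - i))"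
    by (simp add: poly_altdef binomial_ring sum_distrib_left mult.assoc)
  then show ?thesis
    by (simp add: sum.Sigma)
qed

text \<open>By the binomial theorem a polynomial kernel P(y + a - t) is a finite sum of products
  \<alpha>(y) \<beta>(t), so differentiating under the integral with moving upper limit reduces to the
  product rule.\<close>

lemma has_real_derivative_poly_convolution:
  fixes P :: "real poly"
  assumes h: "continuous_on {a..b} h" and s: "s \<in> {a..b}"
  shows "((\<lambda>y. integral {a..y} (\<lambda>t. poly P (y + a - t) * h t)) has_real_derivative
      poly P a * h s + integral {a..s} (\<lambda>t. poly (pderiv P) (s + a - t) * h t)) (at s within {a..b})"
proof -
  define I where "I = Sigma {..degree P} (\<lambda>j. {..j})"
  define \<alpha> where "\<alpha> p y = coeff P (fst p) * of_nat (fst p choose snd p) * y ^ snd p" for p and y :: real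
  define \<alpha>' where "\<alpha>' p y = coeff P (fst p) * of_nat (fst p choose snd p) * (of_nat (snd p) * y ^ (snd p - 1))"
    for p and y :: real
  define \<beta> where "\<beta> p t = (a - t) ^ (fst p - snd p) * h t" for p and t :: real
  have kernel: "poly P (y + a - t) * h t = (\<Sum>p\<in>I. \<alpha> p y * \<beta> p t)" for y t
    using poly_add_binomial_expansion[of P y "a - t"]
    by (simp add: I_def \<alpha>_def \<beta>_def case_prod_beta sum_distrib_right mult.assoc add_diff_eq)
  have \<alpha>_deriv: "(\<alpha> p has_real_derivative \<alpha>' p y) (at y)" for p y
    unfolding \<alpha>_def[abs_def] \<alpha>'_def by (auto intro!: derivative_eq_intros)
  have kernel_deriv: "poly (pderiv P) (s + a - t) * h t = (\<Sum>p\<in>I. \<alpha>' p s * \<beta> p t)" for t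
  proof (rule DERIV_unique)
    show "((\<lambda>y. poly P (y + a - t) * h t) has_real_derivative poly (pderiv P) (s + a - t) * h t) (at s)"
      by (auto intro!: derivative_eq_intros DERIV_chain2[OF poly_DERIV])
    show "((\<lambda>y. poly P (y + a - t) * h t) has_real_derivative (\<Sum>p\<in>I. \<alpha>' p s * \<beta> p t)) (at s)"
      unfolding kernel by (auto intro!: derivative_eq_intros \<alpha>_deriv)
  qed
  have "((\<lambda>y. integral {a..y} (\<lambda>t. \<Sum>p\<in>I. \<alpha> p y * \<beta> p t)) has_real_derivative
      (\<Sum>p\<in>I. \<alpha> p s * \<beta> p s) + integral {a..s} (\<lambda>t. \<Sum>p\<in>I. \<alpha>' p s * \<beta> p t)) (at s within {a..b})"
  proof (rule has_real_derivative_integral_separable[OF _ \<alpha>_deriv _ s])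
    show "finite I"
      by (simp add: I_def)
    show "continuous_on {a..b} (\<beta> p)" for p
      unfolding \<beta>_def by (intro continuous_intros h)
  qed
  then show ?thesis
    by (simp flip: kernel kernel_deriv)
qed

lemma integral_poly_convolution_by_parts:
  fixes P :: "real poly"
  assumes \<Phi>: "\<And>t. t \<in> {a..s} \<Longrightarrow> (\<Phi> has_real_derivative q t) (at t within {a..s})"
    and q: "continuous_on {a..s} q" and \<Phi>a: "\<Phi> a = 0" and "a \<le> s"
  shows "integral {a..s} (\<lambda>t. poly P (s + a - t) * q t)
      = poly P a * \<Phi> s + integral {a..s} (\<lambda>t. poly (pderiv P) (s + a - t) * \<Phi> t)"
proof -
  have \<Phi>_cont: "continuous_on {a..s} \<Phi>"
    using \<Phi> DERIV_continuous continuous_on_eq_continuous_within by blast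
  have "((\<lambda>t. poly P (s + a - t) * q t - poly (pderiv P) (s + a - t) * \<Phi> t) has_integral
      poly P (s + a - s) * \<Phi> s - poly P (s + a - a) * \<Phi> a) {a..s}"
  proof (rule fundamental_theorem_of_calculus[OF \<open>a \<le> s\<close>])
    fix x assume x: "x \<in> {a..s}"
    have "((\<lambda>t. poly P (s + a - t) * \<Phi> t) has_real_derivative
        poly P (s + a - x) * q x - poly (pderiv P) (s + a - x) * \<Phi> x) (at x within {a..s})"
      by (auto intro!: derivative_eq_intros DERIV_chain2[OF poly_DERIV] \<Phi> x simp: algebra_simps)
    then show "((\<lambda>t. poly P (s + a - t) * \<Phi> t) has_vector_derivative
        poly P (s + a - x) * q x - poly (pderiv P) (s + a - x) * \<Phi> x) (at x within {a..s})"
      by (simp add: has_real_derivative_iff_has_vector_derivative)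
  qed
  then have "integral {a..s} (\<lambda>t. poly P (s + a - t) * q t - poly (pderiv P) (s + a - t) * \<Phi> t)
      = poly P a * \<Phi> s"
    using \<Phi>a by (simp add: integral_unique)
  moreover have "integral {a..s} (\<lambda>t. poly P (s + a - t) * q t - poly (pderiv P) (s + a - t) * \<Phi> t)
      = integral {a..s} (\<lambda>t. poly P (s + a - t) * q t)
        - integral {a..s} (\<lambda>t. poly (pderiv P) (s + a - t) * \<Phi> t)"
    by (intro integral_diff integrable_continuous_interval continuous_intros q \<Phi>_cont)
  ultimately show ?thesis
    by simp
qed

lemma integral_poly_convolution_antiderivative:
  fixes P :: "real poly"
  assumes \<Phi>: "\<And>t. t \<in> {a..y} \<Longrightarrow> (\<Phi> has_real_derivative q t) (at t within {a..y})"
    and q: "continuous_on {a..y} q" and \<Phi>a: "\<Phi> a = 0" and "a \<le> y"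
  shows "integral {a..y} (\<lambda>s. integral {a..s} (\<lambda>t. poly P (s + a - t) * q t))
      = integral {a..y} (\<lambda>t. poly P (y + a - t) * \<Phi> t)"
proof -
  have \<Phi>_cont: "continuous_on {a..y} \<Phi>"
    using \<Phi> DERIV_continuous continuous_on_eq_continuous_within by blast
  have "((\<lambda>s. integral {a..s} (\<lambda>t. poly P (s + a - t) * q t)) has_integral
      integral {a..y} (\<lambda>t. poly P (y + a - t) * \<Phi> t) - integral {a..a} (\<lambda>t. poly P (a + a - t) * \<Phi> t))
      {a..y}"
  proof (rule fundamental_theorem_of_calculus[OF \<open>a \<le> y\<close>])
    fix s assume s: "s \<in> {a..y}"
    have "((\<lambda>s. integral {a..s} (\<lambda>t. poly P (s + a - t) * \<Phi> t)) has_real_derivative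
        poly P a * \<Phi> s + integral {a..s} (\<lambda>t. poly (pderiv P) (s + a - t) * \<Phi> t)) (at s within {a..y})"
      by (rule has_real_derivative_poly_convolution[OF \<Phi>_cont s])
    also have "poly P a * \<Phi> s + integral {a..s} (\<lambda>t. poly (pderiv P) (s + a - t) * \<Phi> t)
        = integral {a..s} (\<lambda>t. poly P (s + a - t) * q t)"
      using s by (intro integral_poly_convolution_by_parts[symmetric] \<Phi>a)
        (auto intro: DERIV_subset[OF \<Phi>] continuous_on_subset[OF q])
    finally show "((\<lambda>s. integral {a..s} (\<lambda>t. poly P (s + a - t) * \<Phi> t)) has_vector_derivative
        integral {a..s} (\<lambda>t. poly P (s + a - t) * q t)) (at s within {a..y})"
      by (simp add: has_real_derivative_iff_has_vector_derivative)
  qed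
  then show ?thesis
    by (simp add: integral_unique)
qed

fun gegen_poly :: "real \<Rightarrow> nat \<Rightarrow> real poly" where
  "gegen_poly l 0 = 1"
| "gegen_poly l (Suc 0) = [:0, 2 * l:]"
| "gegen_poly l (Suc (Suc n)) =
     smult (1 / (real n + 2))
       (smult (2 * (real n + 1 + l)) ([:0, 1:] * gegen_poly l (Suc n))
        - smult (real n + 2 * l) (gegen_poly l n))"

lemma poly_gegen_poly: "poly (gegen_poly l n) = gegen_nat l n"
  by (induction l n rule: gegen_poly.induct) (auto simp: fun_eq_iff field_simps)

lemma gegenbauer_eq_poly: "gegenbauer l k = poly (if k < 0 then 0 else gegen_poly l (nat k))"
  by (simp add: fun_eq_iff gegenbauer_def poly_gegen_poly)

lemma continuous_on_gegenbauer: "continuous_on S (gegenbauer l k)"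
  unfolding gegenbauer_eq_poly by (intro continuous_intros)

lemma fM_eq_poly: "fM l M a = poly (\<Sum>m\<le>M. smult (a m) (gegen_poly l m))"
  by (simp add: fun_eq_iff fM_def poly_sum poly_gegen_poly gegenbauer_def)

lemma poly_pderiv_gegen_poly_Suc_Suc:
  "(real n + 2) * poly (pderiv (gegen_poly l (Suc (Suc n)))) x =
     2 * (real n + 1 + l) * (gegen_nat l (Suc n) x + x * poly (pderiv (gegen_poly l (Suc n))) x)
     - (real n + 2 * l) * poly (pderiv (gegen_poly l n)) x"
  by (simp add: pderiv_smult pderiv_mult pderiv_diff pderiv_pCons poly_gegen_poly field_simps)

lemma gegen_derivative_relations:
  fixes l x :: real
  defines "D \<equiv> \<lambda>m. poly (pderiv (gegen_poly l m)) x"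
  shows "x * D (Suc m) - D m = real (Suc m) * gegen_nat l (Suc m) x
    \<and> D (Suc m) - x * D m = (real m + 2 * l) * gegen_nat l m x"
proof (induction m)
  case 0
  show ?case by (simp add: D_def pderiv_pCons)
next
  case (Suc m)
  then have A: "x * D (Suc m) - D m = real (Suc m) * gegen_nat l (Suc m) x"
    and B: "D (Suc m) - x * D m = (real m + 2 * l) * gegen_nat l m x" by auto
  have rec_C: "(real m + 2) * gegen_nat l (Suc (Suc m)) x =
      2 * (real m + 1 + l) * x * gegen_nat l (Suc m) x - (real m + 2 * l) * gegen_nat l m x"
    by (simp add: field_simps)
  have rec_D: "(real m + 2) * D (Suc (Suc m)) =
      2 * (real m + 1 + l) * (gegen_nat l (Suc m) x + x * D (Suc m)) - (real m + 2 * l) * D m"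
    unfolding D_def by (rule poly_pderiv_gegen_poly_Suc_Suc)
  have "(real m + 2) * (D (Suc (Suc m)) - x * D (Suc m)) =
      (real m + 2) * ((real (Suc m) + 2 * l) * gegen_nat l (Suc m) x)"
    using A rec_D unfolding of_nat_Suc by algebra
  then have B': "D (Suc (Suc m)) - x * D (Suc m) = (real (Suc m) + 2 * l) * gegen_nat l (Suc m) x"
    by simp
  moreover have "x * D (Suc (Suc m)) - D (Suc m) = real (Suc (Suc m)) * gegen_nat l (Suc (Suc m)) x"
    using A B B' rec_C unfolding of_nat_Suc by algebra
  ultimately show ?case by simp
qed

lemma has_real_derivative_gegenbauer_diff:
  "((\<lambda>t. gegenbauer l (int n + 1) t - gegenbauer l (int n - 1) t) has_real_derivative
      2 * (real n + l) * gegenbauer l (int n) x) (at x)"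
proof (cases n)
  case 0
  then show ?thesis
    by (auto simp: gegenbauer_def intro!: derivative_eq_intros)
next
  case (Suc m)
  have "((\<lambda>t. gegen_nat l (Suc (Suc m)) t - gegen_nat l m t) has_real_derivative
      poly (pderiv (gegen_poly l (Suc (Suc m)))) x - poly (pderiv (gegen_poly l m)) x) (at x)"
    unfolding poly_gegen_poly[symmetric] by (intro derivative_intros poly_DERIV)
  moreover have "poly (pderiv (gegen_poly l (Suc (Suc m)))) x - poly (pderiv (gegen_poly l m)) x
      = 2 * (real (Suc m) + l) * gegen_nat l (Suc m) x"
  proof -
    have "x * poly (pderiv (gegen_poly l (Suc m))) x - poly (pderiv (gegen_poly l m)) x
        = real (Suc m) * gegen_nat l (Suc m) x"
      and "poly (pderiv (gegen_poly l (Suc (Suc m)))) x - x * poly (pderiv (gegen_poly l (Suc m))) x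
        = (real (Suc m) + 2 * l) * gegen_nat l (Suc m) x"
      using gegen_derivative_relations[of x l m] gegen_derivative_relations[of x l "Suc m"] by auto
    then show ?thesis
      by (simp add: algebra_simps del: gegen_poly.simps)
  qed
  ultimately show ?thesis
    using Suc by (simp add: gegenbauer_def nat_add_distrib)
qed

lemma fact_mult_gegen_nat_minus_one:
  "fact n * gegen_nat l n (-1) = (-1) ^ n * pochhammer (2 * l) n"
proof (induction l n "-1 :: real" rule: gegen_nat.induct)
  case (3 l n)
  have "fact (Suc (Suc n)) * gegen_nat l (Suc (Suc n)) (-1) =
      - 2 * (real n + 1 + l) * (fact (Suc n) * gegen_nat l (Suc n) (-1))
      - (real n + 1) * (real n + 2 * l) * (fact n * gegen_nat l n (-1))"
    by (simp add: field_simps)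
  also have "\<dots> = (-1) ^ Suc (Suc n) * pochhammer (2 * l) (Suc (Suc n))"
    unfolding 3 by (simp add: pochhammer_Suc algebra_simps)
  finally show ?case .
qed auto

lemma gegenbauer_minus_one_diff:
  "gegenbauer l (int n + 1) (-1) - gegenbauer l (int n - 1) (-1) = Scoef l n"
proof (cases n)
  case 0
  then show ?thesis by (simp add: gegenbauer_def Scoef_def)
next
  case (Suc m)
  have "fact (Suc (Suc m)) * (gegen_nat l (Suc (Suc m)) (-1) - gegen_nat l m (-1))
      = fact (Suc (Suc m)) * gegen_nat l (Suc (Suc m)) (-1)
        - (real m + 1) * (real m + 2) * (fact m * gegen_nat l m (-1))"
    by (simp add: algebra_simps)
  also have "\<dots> = 2 * (-1) ^ m * (l + real m + 1) * ((2 * l - 1) * pochhammer (2 * l) m)"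
    unfolding fact_mult_gegen_nat_minus_one by (simp add: pochhammer_Suc algebra_simps)
  also have "\<dots> = fact (Suc (Suc m)) * Scoef l (Suc m)"
    by (simp add: Scoef_def pochhammer_rec)
  finally show ?thesis
    using Suc by (simp add: gegenbauer_def nat_add_distrib)
qed

lemma Rtilde_zero:
  assumes "-1 \<le> y"
  shows "Rtilde l M a 0 y = integral {-1..y} (fM l M a)"
  using integral_reflect_Icc[of "-1" y "fM l M a"]
  by (simp add: Rtilde_def gegenbauer_def)

lemma Rtilde_recurrence:
  assumes nonzero: "real n + l \<noteq> 0" and y: "-1 \<le> y"
  shows "Rtilde l M a (int n + 1) y =
           2 * (real n + l) * integral {-1..y} (Rtilde l M a (int n))
           + Rtilde l M a (int n - 1) y
           + Scoef l n * integral {-1..y} (fM l M a)"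
proof -
  define P where "P = (\<Sum>m\<le>M. smult (a m) (gegen_poly l m))"
  define c where "c = 2 * (real n + l)"
  define \<Phi> where "\<Phi> t = (gegenbauer l (int n + 1) t - gegenbauer l (int n - 1) t - Scoef l n) / c" for t
  have c: "c \<noteq> 0"
    using nonzero by (simp add: c_def)
  have fM: "fM l M a = poly P"
    by (simp add: P_def fM_eq_poly)
  have \<Phi>_deriv: "(\<Phi> has_real_derivative gegenbauer l (int n) t) (at t within S)" for t S
  proof -
    have "(\<Phi> has_real_derivative (c * gegenbauer l (int n) t - 0) / c) (at t)"
      unfolding \<Phi>_def[abs_def] c_def
      by (intro DERIV_cdivide DERIV_diff has_real_derivative_gegenbauer_diff DERIV_const)
    then show ?thesis
      using c by (simp add: has_field_derivative_at_within)
  qed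
  have \<Phi>_minus_one: "\<Phi> (-1) = 0"
    by (simp add: \<Phi>_def gegenbauer_minus_one_diff)
  have "Rtilde l M a (int n + 1) y = integral {-1..y} (\<lambda>t. poly P (y - 1 - t) * gegenbauer l (int n - 1) t
      + Scoef l n * poly P (y - 1 - t) + c * (poly P (y - 1 - t) * \<Phi> t))"
    using c by (simp add: Rtilde_def fM \<Phi>_def field_simps)
  also have "\<dots> = Rtilde l M a (int n - 1) y + Scoef l n * integral {-1..y} (\<lambda>t. poly P (y - 1 - t))
      + c * integral {-1..y} (\<lambda>t. poly P (y - 1 - t) * \<Phi> t)"
  proof -
    have \<Phi>_cont: "continuous_on {-1..y} \<Phi>"
      unfolding \<Phi>_def[abs_def] using c by (auto intro!: continuous_intros continuous_on_gegenbauer)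
    show ?thesis
      unfolding Rtilde_def fM
      by (subst integral_add integral_mult_right;
          auto intro!: integrable_continuous_interval continuous_intros continuous_on_gegenbauer \<Phi>_cont)+
  qed
  also have "integral {-1..y} (\<lambda>t. poly P (y - 1 - t)) = integral {-1..y} (fM l M a)"
    using integral_reflect_Icc[of "-1" y "poly P"] by (simp add: fM)
  also have "integral {-1..y} (\<lambda>t. poly P (y - 1 - t) * \<Phi> t)
      = integral {-1..y} (Rtilde l M a (int n))"
    using integral_poly_convolution_antiderivative[of "-1" y \<Phi> "gegenbauer l (int n)" P]
      \<Phi>_deriv \<Phi>_minus_one y continuous_on_gegenbauer
    by (simp add: Rtilde_def[abs_def] fM)
  finally show ?thesis
    by (simp add: c_def algebra_simps)
qed

theorem theorem4p2:
  fixes l :: real and M :: nat and a :: "nat \<Rightarrow> real"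
  assumes "l > -1/2" and "l \<noteq> 0"
  shows "(\<forall>y\<in>{-1..1}. Rtilde l M a 0 y = integral {-1..y} (\<lambda>t. fM l M a t))
    \<and> (\<forall>n::nat. \<forall>y\<in>{-1..1}.
         Rtilde l M a (int n + 1) y =
           2 * (real n + l) * integral {-1..y} (\<lambda>s. Rtilde l M a (int n) s)
           + Rtilde l M a (int n - 1) y
           + Scoef l n * integral {-1..y} (\<lambda>t. fM l M a t))"
proof -
  have "real n + l \<noteq> 0" for n
    using assms by (cases n) auto
  then show ?thesis
    using Rtilde_zero Rtilde_recurrence by auto
qed

end
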